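(* Let $n,m$ be positive integers. If the $n\times m$ board has a closed knight tour, then for all positive integers $p_1,\dots,p_r$ the $n\times m\times p_1\times\cdots\times p_r$ board has a closed knight tour.
   Context: For positive integers $n_1,\dots,n_d$, the $n_1\times\cdots\times n_d$ board is $\{1,\dots,n_1\}\times\cdots\times\{1,\dots,n_d\}\subset\mathbb{Z}^d$. A knight move is a vector in $\mathbb{Z}^d$ with exactly one coordinate in $\{\pm1\}$, exactly one coordinate in $\{\pm2\}$ and all other coordinates $0$; two cells are adjacent iff their difference is a knight move. A closed knight tour is a Hamiltonian cycle in this graph. *)

theory Defs
  imports Main
begin

definition board :: "nat list \<Rightarrow> int list set" where
  "board ns = {xs. length xs = length ns \<and>
                  (\<forall>i<length ns. 1 \<le> xs ! i \<and> xs ! i \<le> int (ns ! i))}"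

definition knight_move :: "int list \<Rightarrow> bool" where
  "knight_move v \<longleftrightarrow> (\<exists>i j. i < length v \<and> j < length v \<and> i \<noteq> j \<and>
       \<bar>v ! i\<bar> = 1 \<and> \<bar>v ! j\<bar> = 2 \<and>
       (\<forall>k<length v. k \<noteq> i \<and> k \<noteq> j \<longrightarrow> v ! k = 0))"

definition knight_adj :: "int list \<Rightarrow> int list \<Rightarrow> bool" where
  "knight_adj x y \<longleftrightarrow> length x = length y \<and> knight_move (map2 (-) y x)"

definition closed_knight_tour :: "nat list \<Rightarrow> bool" where
  "closed_knight_tour ns \<longleftrightarrow> (\<exists>cs. distinct cs \<and> set cs = board ns \<and> 3 \<le> length cs \<and>
      (\<forall>i<length cs. knight_adj (cs ! i) (cs ! ((i + 1) mod length cs))))"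

end

theory Submission
  imports Defs
begin

text \<open>Call two edges {x, y} and {x', y'} of a closed tour parallel if x' and y' arise from
  x and y by a step of length 2 along a coordinate axis. Given a tour of a board B with a
  parallel pair, stack p copies of it on the layers B \<times> {z}. Between layers z and z + 1 delete
  {x, y} from the lower copy and {x', y'} from the upper one and join x to x' and y to y': these
  are knight moves, so the copies are spliced into one closed tour of B \<times> {1..p}. Every other
  edge of the tour survives in every layer, so a second parallel pair, disjoint from the
  first, reappears in layers 1 and 2 and supplies two disjoint parallel pairs for the next
  dimension. On an n \<times> m board such pairs are found at two corners of a side of length at
  least 4: the moves forced at a corner cell and at the cell two steps along the side already
  contain a parallel pair.\<close>

fun path_edges :: "'a list \<Rightarrow> 'a set set" where
  "path_edges (x # y # zs) = insert {x, y} (path_edges (y # zs))"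
| "path_edges _ = {}"

definition cycle_edges :: "'a list \<Rightarrow> 'a set set" where
  "cycle_edges xs = insert {last xs, hd xs} (path_edges xs)"

definition ham_cycle :: "('a \<Rightarrow> 'a \<Rightarrow> bool) \<Rightarrow> 'a set \<Rightarrow> 'a list \<Rightarrow> bool" where
  "ham_cycle R V xs \<longleftrightarrow>
     distinct xs \<and> set xs = V \<and> 3 \<le> length xs \<and> successively R xs \<and> R (last xs) (hd xs)"

lemma cyclically_successive_iff:
  assumes "xs \<noteq> []"
  shows "(\<forall>i<length xs. R (xs ! i) (xs ! ((i + 1) mod length xs))) \<longleftrightarrow>
    successively R xs \<and> R (last xs) (hd xs)" (is "?cyc \<longleftrightarrow> _")
proof -
  have last: "last xs = xs ! (length xs - 1)" and hd: "hd xs = xs ! 0"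
    using assms by (simp_all add: last_conv_nth hd_conv_nth)
  have "?cyc \<longleftrightarrow> (\<forall>i. Suc i < length xs \<longrightarrow> R (xs ! i) (xs ! Suc i)) \<and>
      R (xs ! (length xs - 1)) (xs ! 0)"
  proof
    assume cyc: ?cyc
    have "length xs - 1 < length xs" "(length xs - 1 + 1) mod length xs = 0"
      using assms by simp_all
    then have "R (xs ! (length xs - 1)) (xs ! 0)"
      using cyc by metis
    moreover have "R (xs ! i) (xs ! Suc i)" if "Suc i < length xs" for i
      using cyc that by (metis Suc_eq_plus1 Suc_lessD mod_less)
    ultimately show "(\<forall>i. Suc i < length xs \<longrightarrow> R (xs ! i) (xs ! Suc i)) \<and>
        R (xs ! (length xs - 1)) (xs ! 0)"
      by blast
  next
    assume "(\<forall>i. Suc i < length xs \<longrightarrow> R (xs ! i) (xs ! Suc i)) \<and>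
      R (xs ! (length xs - 1)) (xs ! 0)"
    then show ?cyc
      by (metis Suc_eq_plus1 Suc_lessI diff_Suc_1 mod_less mod_self)
  qed
  then show ?thesis
    by (simp add: successively_conv_nth last hd)
qed

lemma closed_knight_tour_iff_ham_cycle:
  "closed_knight_tour ns \<longleftrightarrow> (\<exists>cs. ham_cycle knight_adj (board ns) cs)"
proof -
  have "3 \<le> length cs \<Longrightarrow> cs \<noteq> []" for cs :: "int list list" by auto
  then show ?thesis
    unfolding closed_knight_tour_def ham_cycle_def using cyclically_successive_iff by metis
qed

lemma path_edges_Cons:
  "path_edges (x # xs) = (if xs = [] then {} else insert {x, hd xs} (path_edges xs))"
  by (cases xs) auto

lemma path_edges_append:
  "path_edges (xs @ ys) =
     path_edges xs \<union> path_edges ys \<union> (if xs = [] \<or> ys = [] then {} else {{last xs, hd ys}})"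
  by (induction xs) (auto simp: path_edges_Cons)

lemma path_edges_rev: "path_edges (rev xs) = path_edges xs"
  by (induction xs) (auto simp: path_edges_append path_edges_Cons insert_commute last_rev)

lemma path_edges_map: "path_edges (map f xs) = (`) f ` path_edges xs"
  by (induction xs rule: path_edges.induct) auto

lemma path_edges_split:
  "E \<in> path_edges xs \<Longrightarrow> \<exists>ys u v zs. xs = ys @ u # v # zs \<and> E = {u, v}"
proof (induction xs rule: path_edges.induct)
  case (1 x y zs)
  show ?case
  proof (cases "E = {x, y}")
    case True
    then show ?thesis by (intro exI[of _ "[]"]) auto
  next
    case False
    with 1 obtain ys u v zs' where "y # zs = ys @ u # v # zs'" "E = {u, v}" by auto
    then show ?thesis by (intro exI[of _ "x # ys"]) auto
  qed
qed auto

lemma cycle_edges_nonempty: "E \<in> cycle_edges xs \<Longrightarrow> E \<noteq> {}"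
  unfolding cycle_edges_def by (auto dest!: path_edges_split)

lemma cycle_edges_map: "xs \<noteq> [] \<Longrightarrow> cycle_edges (map f xs) = (`) f ` cycle_edges xs"
  by (simp add: cycle_edges_def path_edges_map last_map hd_map)

lemma ham_cycle_rotate:
  assumes "ham_cycle R V (xs @ ys)"
  shows "ham_cycle R V (ys @ xs) \<and> cycle_edges (ys @ xs) = cycle_edges (xs @ ys)"
  using assms
  by (cases "xs = [] \<or> ys = []")
    (auto simp: ham_cycle_def cycle_edges_def path_edges_append successively_append_iff)

lemma ham_cycle_rev:
  assumes "symp R" "ham_cycle R V xs"
  shows "ham_cycle R V (rev xs) \<and> cycle_edges (rev xs) = cycle_edges xs"
proof -
  have "xs \<noteq> []" using assms(2) by (auto simp: ham_cycle_def)
  moreover have "successively R (rev xs)"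
    using assms by (auto simp: ham_cycle_def intro: successively_mono dest: sympD)
  ultimately show ?thesis
    using assms by (auto simp: ham_cycle_def cycle_edges_def path_edges_rev hd_rev last_rev
        insert_commute dest: sympD)
qed

lemma ham_cycle_reroot:
  assumes "symp R" "ham_cycle R V xs" "{a, b} \<in> cycle_edges xs"
  obtains ys where "ham_cycle R V ys" "cycle_edges ys = cycle_edges xs" "hd ys = b" "last ys = a"
proof -
  note conclude = that
  have flip: "thesis" if "ham_cycle R V ys" "cycle_edges ys = cycle_edges xs"
    "hd ys = a" "last ys = b" for ys
  proof -
    have "ys \<noteq> []" using that(1) by (auto simp: ham_cycle_def)
    then show thesis
      using that ham_cycle_rev[OF assms(1) that(1)]
      by (intro conclude[of "rev ys"]) (auto simp: hd_rev last_rev)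
  qed
  show thesis
  proof (cases "{a, b} = {last xs, hd xs}")
    case True
    then consider "a = last xs" "b = hd xs" | "a = hd xs" "b = last xs"
      by (auto simp: doubleton_eq_iff)
    then show thesis
      using conclude flip assms(2) by cases blast+
  next
    case False
    then have "{a, b} \<in> path_edges xs" using assms(3) by (simp add: cycle_edges_def)
    then obtain ys u v zs where xs: "xs = (ys @ [u]) @ v # zs" and uv: "{a, b} = {u, v}"
      using path_edges_split by fastforce
    then have "ham_cycle R V ((v # zs) @ ys @ [u])"
      "cycle_edges ((v # zs) @ ys @ [u]) = cycle_edges xs"
      using ham_cycle_rotate[of R V "ys @ [u]" "v # zs"] assms(2) by auto
    moreover have "a = u \<and> b = v \<or> a = v \<and> b = u"
      using uv by (auto simp: doubleton_eq_iff)
    ultimately show thesis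
      using conclude flip by auto
  qed
qed

lemma ham_cycle_splice:
  assumes "symp R" "ham_cycle R V xs" "ham_cycle R W ys" "V \<inter> W = {}"
    "{a, b} \<in> cycle_edges xs" "{c, d} \<in> cycle_edges ys" "R a c" "R b d"
  obtains zs where "ham_cycle R (V \<union> W) zs"
    "cycle_edges xs - {{a, b}} \<subseteq> cycle_edges zs" "cycle_edges ys - {{c, d}} \<subseteq> cycle_edges zs"
proof -
  obtain xs' where xs': "ham_cycle R V xs'" "cycle_edges xs' = cycle_edges xs"
    "hd xs' = b" "last xs' = a"
    using ham_cycle_reroot[OF assms(1,2,5)] by blast
  have "{d, c} \<in> cycle_edges ys"
    using assms(6) by (simp add: insert_commute)
  then obtain ys' where ys': "ham_cycle R W ys'" "cycle_edges ys' = cycle_edges ys"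
    "hd ys' = c" "last ys' = d"
    using ham_cycle_reroot[OF assms(1,3)] by blast
  have ne: "xs' \<noteq> []" "ys' \<noteq> []" using xs' ys' by (auto simp: ham_cycle_def)
  have "R d b" using assms(1,8) by (auto dest: sympD)
  then have "ham_cycle R (V \<union> W) (xs' @ ys')"
    using xs' ys' ne assms(4,7) by (auto simp: ham_cycle_def successively_append_iff)
  moreover have "path_edges xs' \<subseteq> cycle_edges (xs' @ ys')"
    "path_edges ys' \<subseteq> cycle_edges (xs' @ ys')"
    using ne by (auto simp: cycle_edges_def path_edges_append)
  moreover have "cycle_edges xs = insert {a, b} (path_edges xs')"
    "cycle_edges ys = insert {c, d} (path_edges ys')"
    using xs' ys' by (simp_all add: cycle_edges_def insert_commute)
  ultimately show thesis
    by (intro that[of "xs' @ ys'"]) auto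
qed

lemma ham_cycle_two_edges_at:
  assumes "symp R" "ham_cycle R V xs" "v \<in> V"
  obtains u w where "u \<noteq> w" "u \<in> V" "w \<in> V" "R v u" "R v w"
    "{v, u} \<in> cycle_edges xs" "{v, w} \<in> cycle_edges xs"
proof -
  obtain ys zs where "xs = ys @ v # zs"
    using assms by (auto simp: ham_cycle_def dest: split_list)
  then have rot: "ham_cycle R V (v # zs @ ys)" "cycle_edges (v # zs @ ys) = cycle_edges xs"
    using ham_cycle_rotate[of R V ys "v # zs"] assms(2) by auto
  then obtain u rs where rs: "zs @ ys = u # rs" "rs \<noteq> []"
    by (cases "zs @ ys"; cases "tl (zs @ ys)") (auto simp: ham_cycle_def)
  have "u \<noteq> last rs" "u \<in> V" "last rs \<in> V" "R v u" "R (last rs) v"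
    using rot(1) rs by (auto simp: ham_cycle_def)
  moreover have "cycle_edges (v # zs @ ys) = insert {last rs, v} (insert {v, u} (path_edges (u # rs)))"
    using rs by (simp add: cycle_edges_def)
  then have "{v, u} \<in> cycle_edges (v # zs @ ys)" "{v, last rs} \<in> cycle_edges (v # zs @ ys)"
    by (simp_all add: insert_commute)
  then have "{v, u} \<in> cycle_edges xs" "{v, last rs} \<in> cycle_edges xs"
    using rot(2) by simp_all
  ultimately show thesis
    using that assms(1) by (auto dest: sympD)
qed

lemma knight_move_uminus: "knight_move v \<Longrightarrow> knight_move (map uminus v)"
  unfolding knight_move_def
  by (metis (no_types, lifting) abs_minus_cancel length_map minus_zero nth_map)

lemma knight_adj_sym: "knight_adj x y \<Longrightarrow> knight_adj y x"
proof -
  assume xy: "knight_adj x y"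
  then have len: "length x = length y" by (simp add: knight_adj_def)
  then have "map2 (-) x y = map uminus (map2 (-) y x)"
    by (induction x y rule: list_induct2) auto
  moreover have "knight_move (map uminus (map2 (-) y x))"
    using xy knight_move_uminus by (simp only: knight_adj_def)
  ultimately show ?thesis
    using len by (simp only: knight_adj_def)
qed

lemma symp_knight_adj: "symp knight_adj"
  by (auto intro: sympI knight_adj_sym)

lemma knight_adj_snoc: "knight_adj u w \<Longrightarrow> knight_adj (u @ [z]) (w @ [z])"
  unfolding knight_adj_def knight_move_def
  by (clarsimp simp: nth_append) metis

lemma knight_move_2d: "knight_move [x, y] \<longleftrightarrow> \<bar>x\<bar> = 1 \<and> \<bar>y\<bar> = 2 \<or> \<bar>x\<bar> = 2 \<and> \<bar>y\<bar> = 1"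
proof
  assume "knight_move [x, y]"
  then obtain i j where "i < length [x, y]" "j < length [x, y]" "i \<noteq> j"
    "\<bar>[x, y] ! i\<bar> = 1" "\<bar>[x, y] ! j\<bar> = 2"
    unfolding knight_move_def by blast
  then show "\<bar>x\<bar> = 1 \<and> \<bar>y\<bar> = 2 \<or> \<bar>x\<bar> = 2 \<and> \<bar>y\<bar> = 1"
    by (auto simp: less_Suc_eq)
next
  assume "\<bar>x\<bar> = 1 \<and> \<bar>y\<bar> = 2 \<or> \<bar>x\<bar> = 2 \<and> \<bar>y\<bar> = 1"
  then show "knight_move [x, y]"
    unfolding knight_move_def
    by (elim disjE; intro exI[of _ 0] exI[of _ 1] exI[of _ 1] exI[of _ 0])
      (auto simp: less_Suc_eq)
qed

lemma knight_adj_2d: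
  "knight_adj [a, b] [c, d] \<longleftrightarrow> \<bar>c - a\<bar> = 1 \<and> \<bar>d - b\<bar> = 2 \<or> \<bar>c - a\<bar> = 2 \<and> \<bar>d - b\<bar> = 1"
  by (simp add: knight_adj_def knight_move_2d)

definition two_step :: "int list \<Rightarrow> int list \<Rightarrow> bool" where
  "two_step u w \<longleftrightarrow> length u = length w \<and>
     (\<exists>i<length u. \<bar>w ! i - u ! i\<bar> = 2 \<and> (\<forall>k<length u. k \<noteq> i \<longrightarrow> w ! k = u ! k))"

lemma two_step_snoc: "two_step u w \<Longrightarrow> two_step (u @ [z]) (w @ [z])"
  unfolding two_step_def
  by (clarsimp simp: nth_append) metis

lemma two_step_snoc_knight_adj:
  "two_step u w \<Longrightarrow> \<bar>z' - z\<bar> = 1 \<Longrightarrow> knight_adj (u @ [z]) (w @ [z'])"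
  unfolding knight_adj_def knight_move_def two_step_def
  apply (clarsimp simp: nth_append)
  apply (rule_tac x="length u" in exI, simp)
  apply (rule_tac x=i in exI, simp)
  done

lemma two_step_2d_fst: "\<bar>c - a\<bar> = 2 \<Longrightarrow> two_step [a, b] [c, b]"
  unfolding two_step_def by (intro conjI exI[of _ 0]) (auto simp: less_Suc_eq)

lemma two_step_2d_snd: "\<bar>d - b\<bar> = 2 \<Longrightarrow> two_step [a, b] [a, d]"
  unfolding two_step_def by (intro conjI exI[of _ 1]) (auto simp: less_Suc_eq)

definition parallel_edges :: "int list list \<Rightarrow> int list set \<Rightarrow> int list set \<Rightarrow> bool" where
  "parallel_edges cs e f \<longleftrightarrow> e \<in> cycle_edges cs \<and> f \<in> cycle_edges cs \<and> e \<noteq> f \<and>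
     (\<exists>x y x' y'. e = {x, y} \<and> f = {x', y'} \<and> two_step x x' \<and> two_step y y')"

lemma parallel_edgesI:
  assumes "{x, y} \<in> cycle_edges cs" "{x', y'} \<in> cycle_edges cs" "{x, y} \<noteq> {x', y'}"
    "two_step x x'" "two_step y y'"
  shows "parallel_edges cs {x, y} {x', y'}"
  using assms unfolding parallel_edges_def by blast

definition doubly_parallel_tour :: "nat list \<Rightarrow> bool" where
  "doubly_parallel_tour ns \<longleftrightarrow> (\<exists>cs e f g h. ham_cycle knight_adj (board ns) cs \<and>
     parallel_edges cs e f \<and> parallel_edges cs g h \<and> {e, f} \<inter> {g, h} = {})"

lemma doubly_parallel_tour_imp_closed_knight_tour:
  "doubly_parallel_tour ns \<Longrightarrow> closed_knight_tour ns"
  unfolding doubly_parallel_tour_def closed_knight_tour_iff_ham_cycle by blast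

definition layers :: "int list set \<Rightarrow> nat \<Rightarrow> int list set" where
  "layers B k = {u @ [z] | u z. u \<in> B \<and> 1 \<le> z \<and> z \<le> int k}"

lemma board_snoc: "board (ns @ [p]) = layers (board ns) p"
proof (intro set_eqI iffI)
  fix xs assume xs: "xs \<in> board (ns @ [p])"
  then have "xs \<noteq> []" by (auto simp: board_def)
  then obtain u z where xs_eq: "xs = u @ [z]" by (metis append_butlast_last_id)
  have len: "length u = length ns" using xs xs_eq by (simp add: board_def)
  have bounds: "\<forall>i<Suc (length ns). 1 \<le> (u @ [z]) ! i \<and> (u @ [z]) ! i \<le> int ((ns @ [p]) ! i)"
    using xs xs_eq by (simp add: board_def)
  have "1 \<le> u ! i \<and> u ! i \<le> int (ns ! i)" if "i < length ns" for i
    using bounds[rule_format, of i] that len by (simp add: nth_append)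
  moreover have "1 \<le> z \<and> z \<le> int p"
    using bounds[rule_format, of "length ns"] len by (simp add: nth_append)
  ultimately show "xs \<in> layers (board ns) p"
    unfolding layers_def board_def using xs_eq len by blast
next
  fix xs assume "xs \<in> layers (board ns) p"
  then show "xs \<in> board (ns @ [p])"
    unfolding board_def layers_def by (auto simp: nth_append less_Suc_eq)
qed

lemma layers_Suc: "layers B (Suc k) = layers B k \<union> (\<lambda>u. u @ [int k + 1]) ` B"
  unfolding layers_def by (auto; force)

lemma layers_disjoint: "layers B k \<inter> (\<lambda>u. u @ [int k + 1]) ` B = {}"
  unfolding layers_def by auto

definition lift_edge :: "int \<Rightarrow> int list set \<Rightarrow> int list set" where
  "lift_edge z E = (\<lambda>u. u @ [z]) ` E"

lemma lift_edge_doubleton [simp]: "lift_edge z {x, y} = {x @ [z], y @ [z]}"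
  by (simp add: lift_edge_def)

lemma lift_edge_inject: "E \<noteq> {} \<Longrightarrow> lift_edge z E = lift_edge z' E' \<longleftrightarrow> z = z' \<and> E = E'"
  unfolding lift_edge_def by (auto simp: inj_image_eq_iff inj_def)

lemma ham_cycle_snoc:
  assumes "ham_cycle knight_adj B cs"
  shows "ham_cycle knight_adj ((\<lambda>u. u @ [z]) ` B) (map (\<lambda>u. u @ [z]) cs)"
    and "cycle_edges (map (\<lambda>u. u @ [z]) cs) = lift_edge z ` cycle_edges cs"
proof -
  have ne: "cs \<noteq> []" using assms by (auto simp: ham_cycle_def)
  have "successively knight_adj (map (\<lambda>u. u @ [z]) cs)"
    using assms unfolding ham_cycle_def successively_map
    by (auto elim: successively_mono simp: knight_adj_snoc)
  moreover have "knight_adj (last (map (\<lambda>u. u @ [z]) cs)) (hd (map (\<lambda>u. u @ [z]) cs))"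
    using assms ne by (simp add: ham_cycle_def last_map hd_map knight_adj_snoc)
  ultimately show "ham_cycle knight_adj ((\<lambda>u. u @ [z]) ` B) (map (\<lambda>u. u @ [z]) cs)"
    using assms unfolding ham_cycle_def by (auto simp: distinct_map inj_on_def)
  show "cycle_edges (map (\<lambda>u. u @ [z]) cs) = lift_edge z ` cycle_edges cs"
    using ne by (simp add: cycle_edges_map lift_edge_def)
qed

lemma parallel_edges_lift:
  assumes "parallel_edges cs e f" "lift_edge z e \<in> cycle_edges D" "lift_edge z f \<in> cycle_edges D"
  shows "parallel_edges D (lift_edge z e) (lift_edge z f)"
proof -
  obtain x y x' y' where xy: "e = {x, y}" "f = {x', y'}" "two_step x x'" "two_step y y'"
    and "e \<noteq> f"
    using assms(1) unfolding parallel_edges_def by blast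
  have "e \<noteq> {}" using xy(1) by simp
  then have "lift_edge z e \<noteq> lift_edge z f"
    using \<open>e \<noteq> f\<close> by (simp add: lift_edge_inject)
  moreover have "\<exists>x y x' y'. lift_edge z e = {x, y} \<and> lift_edge z f = {x', y'} \<and>
      two_step x x' \<and> two_step y y'"
    using xy by (intro exI[of _ "x @ [z]"] exI[of _ "y @ [z]"] exI[of _ "x' @ [z]"] exI[of _ "y' @ [z]"])
      (simp add: two_step_snoc)
  ultimately show ?thesis
    using assms(2,3) unfolding parallel_edges_def by blast
qed

lemma ham_cycle_add_layer:
  assumes cs: "ham_cycle knight_adj B cs" and ef: "parallel_edges cs e f"
    and D: "ham_cycle knight_adj (layers B k) D" and e: "lift_edge (int k) e \<in> cycle_edges D"
  obtains D' where "ham_cycle knight_adj (layers B (Suc k)) D'"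
    "cycle_edges D - {lift_edge (int k) e} \<subseteq> cycle_edges D'"
    "lift_edge (int k + 1) ` (cycle_edges cs - {f}) \<subseteq> cycle_edges D'"
proof -
  obtain x y x' y' where xy: "e = {x, y}" "f = {x', y'}" "two_step x x'" "two_step y y'"
    and f: "f \<in> cycle_edges cs"
    using ef unfolding parallel_edges_def by blast
  let ?L = "map (\<lambda>u. u @ [int k + 1]) cs"
  have "{x @ [int k], y @ [int k]} \<in> cycle_edges D"
    using e xy(1) by simp
  moreover have "lift_edge (int k + 1) f \<in> cycle_edges ?L"
    using f ham_cycle_snoc(2)[OF cs] by simp
  then have "{x' @ [int k + 1], y' @ [int k + 1]} \<in> cycle_edges ?L"
    using xy(2) by simp
  moreover have "knight_adj (x @ [int k]) (x' @ [int k + 1])"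
    "knight_adj (y @ [int k]) (y' @ [int k + 1])"
    using two_step_snoc_knight_adj xy(3,4) by simp_all
  ultimately obtain D' where D': "ham_cycle knight_adj (layers B k \<union> (\<lambda>u. u @ [int k + 1]) ` B) D'"
    "cycle_edges D - {{x @ [int k], y @ [int k]}} \<subseteq> cycle_edges D'"
    "cycle_edges ?L - {{x' @ [int k + 1], y' @ [int k + 1]}} \<subseteq> cycle_edges D'"
    using ham_cycle_splice[OF symp_knight_adj D ham_cycle_snoc(1)[OF cs] layers_disjoint] by blast
  have "lift_edge (int k + 1) E \<in> cycle_edges ?L - {lift_edge (int k + 1) f}"
    if "E \<in> cycle_edges cs" "E \<noteq> f" for E
    using that cycle_edges_nonempty[OF that(1)] ham_cycle_snoc(2)[OF cs]
    by (simp add: lift_edge_inject)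
  then have "lift_edge (int k + 1) ` (cycle_edges cs - {f}) \<subseteq> cycle_edges D'"
    using D'(3) xy(2) by auto
  moreover have "cycle_edges D - {lift_edge (int k) e} \<subseteq> cycle_edges D'"
    using D'(2) xy(1) by simp
  moreover have "ham_cycle knight_adj (layers B (Suc k)) D'"
    using D'(1) by (simp add: layers_Suc)
  ultimately show thesis
    using that by blast
qed

text \<open>In the stacked tour the copy of e in every layer but the top one is spent on the link
  to the layer above, and the copy of f in every layer but the bottom one on the link below.\<close>
lemma ham_cycle_layers:
  assumes cs: "ham_cycle knight_adj B cs" and ef: "parallel_edges cs e f" and "1 \<le> k"
  shows "\<exists>D. ham_cycle knight_adj (layers B k) D \<and>
    (\<forall>z E. 1 \<le> z \<and> z \<le> int k \<and> E \<in> cycle_edges cs \<and> (z = int k \<or> E \<noteq> e) \<and> (z = 1 \<or> E \<noteq> f)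
      \<longrightarrow> lift_edge z E \<in> cycle_edges D)"
  using assms(3)
proof (induction k rule: nat_induct_at_least)
  case base
  have "layers B 1 = (\<lambda>u. u @ [1]) ` B"
    unfolding layers_def by auto
  then have "ham_cycle knight_adj (layers B 1) (map (\<lambda>u. u @ [1]) cs)"
    using ham_cycle_snoc(1)[OF cs] by simp
  moreover have "lift_edge z E \<in> cycle_edges (map (\<lambda>u. u @ [1]) cs)"
    if "1 \<le> z" "z \<le> int 1" "E \<in> cycle_edges cs" for z E
  proof -
    have "z = 1" using that(1,2) by simp
    then show ?thesis using that(3) ham_cycle_snoc(2)[OF cs] by simp
  qed
  ultimately show ?case by blast
next
  case (Suc k)
  then obtain D where D: "ham_cycle knight_adj (layers B k) D"
    and kept: "\<And>z E. 1 \<le> z \<Longrightarrow> z \<le> int k \<Longrightarrow> E \<in> cycle_edges cs \<Longrightarrow> z = int k \<or> E \<noteq> e \<Longrightarrow>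
      z = 1 \<or> E \<noteq> f \<Longrightarrow> lift_edge z E \<in> cycle_edges D"
    by blast
  have "e \<in> cycle_edges cs" "e \<noteq> f"
    using ef by (auto simp: parallel_edges_def)
  then have "lift_edge (int k) e \<in> cycle_edges D"
    using kept[of "int k" e] Suc.hyps by simp
  then obtain D' where D': "ham_cycle knight_adj (layers B (Suc k)) D'"
    "cycle_edges D - {lift_edge (int k) e} \<subseteq> cycle_edges D'"
    "lift_edge (int k + 1) ` (cycle_edges cs - {f}) \<subseteq> cycle_edges D'"
    using ham_cycle_add_layer[OF cs ef D] by blast
  have "lift_edge z E \<in> cycle_edges D'"
    if "1 \<le> z" "z \<le> int (Suc k)" "E \<in> cycle_edges cs" "z = int (Suc k) \<or> E \<noteq> e" "z = 1 \<or> E \<noteq> f"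
    for z E
  proof (cases "z = int (Suc k)")
    case True
    with that(5) Suc.hyps have "E \<noteq> f" by auto
    with that(3) D'(3) have "lift_edge (int k + 1) E \<in> cycle_edges D'" by blast
    then show ?thesis using True by (simp add: add.commute)
  next
    case False
    with that(2,4) have "z \<le> int k" "E \<noteq> e" by auto
    then have "lift_edge z E \<in> cycle_edges D"
      using kept that(1,3,5) by blast
    moreover have "lift_edge z E \<noteq> lift_edge (int k) e"
      using \<open>E \<noteq> e\<close> cycle_edges_nonempty[OF that(3)] by (simp add: lift_edge_inject)
    ultimately show ?thesis using D'(2) by blast
  qed
  then show ?case using D'(1) by blast
qed

lemma doubly_parallel_tour_snoc:
  assumes "doubly_parallel_tour ns" "0 < p"
  shows "doubly_parallel_tour (ns @ [p])"
proof -
  obtain cs e f g h where cs: "ham_cycle knight_adj (board ns) cs"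
    and ef: "parallel_edges cs e f" and gh: "parallel_edges cs g h" and disj: "{e, f} \<inter> {g, h} = {}"
    using assms(1) unfolding doubly_parallel_tour_def by meson
  have "1 \<le> p" using assms(2) by simp
  then obtain D where D: "ham_cycle knight_adj (layers (board ns) p) D"
    and kept: "\<forall>z E. 1 \<le> z \<and> z \<le> int p \<and> E \<in> cycle_edges cs \<and> (z = int p \<or> E \<noteq> e) \<and>
      (z = 1 \<or> E \<noteq> f) \<longrightarrow> lift_edge z E \<in> cycle_edges D"
    using ham_cycle_layers[OF cs ef] by blast
  have tour: "doubly_parallel_tour (ns @ [p])"
    if "parallel_edges D e' f'" "parallel_edges D g' h'" "{e', f'} \<inter> {g', h'} = {}" for e' f' g' h'
    using D that unfolding doubly_parallel_tour_def board_snoc by meson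
  have edges: "e \<in> cycle_edges cs" "f \<in> cycle_edges cs" "g \<in> cycle_edges cs" "h \<in> cycle_edges cs"
    using ef gh by (simp_all add: parallel_edges_def)
  have nonempty: "e \<noteq> {}" "g \<noteq> {}" "h \<noteq> {}"
    using edges(1,3,4) by (simp_all add: cycle_edges_nonempty)
  show ?thesis
  proof (cases "p = 1")
    case True
    then have "lift_edge 1 E \<in> cycle_edges D" if "E \<in> cycle_edges cs" for E
      using kept[rule_format, of 1 E] that by simp
    then have "parallel_edges D (lift_edge 1 e) (lift_edge 1 f)"
      "parallel_edges D (lift_edge 1 g) (lift_edge 1 h)"
      using parallel_edges_lift[OF ef] parallel_edges_lift[OF gh] edges by simp_all
    moreover have "{lift_edge 1 e, lift_edge 1 f} \<inter> {lift_edge 1 g, lift_edge 1 h} = {}"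
      using disj nonempty by (auto simp: lift_edge_inject)
    ultimately show ?thesis by (rule tour)
  next
    case False
    have "lift_edge z E \<in> cycle_edges D" if "z \<in> {1, 2}" "E \<in> {g, h}" for z E
    proof -
      have "1 \<le> z" "z \<le> int p"
        using that(1) False assms(2) by auto
      moreover have "E \<in> cycle_edges cs" "E \<noteq> e" "E \<noteq> f"
        using that(2) edges disj by auto
      ultimately show ?thesis
        using kept[rule_format, of z E] by blast
    qed
    then have "parallel_edges D (lift_edge 1 g) (lift_edge 1 h)"
      "parallel_edges D (lift_edge 2 g) (lift_edge 2 h)"
      using parallel_edges_lift[OF gh] by simp_all
    moreover have "{lift_edge 1 g, lift_edge 1 h} \<inter> {lift_edge 2 g, lift_edge 2 h} = {}"
      using nonempty by (auto simp: lift_edge_inject)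
    ultimately show ?thesis by (rule tour)
  qed
qed

lemma board_2d:
  "xs \<in> board [n, m] \<longleftrightarrow> (\<exists>i j. xs = [i, j] \<and> 1 \<le> i \<and> i \<le> int n \<and> 1 \<le> j \<and> j \<le> int m)"
proof
  assume xs: "xs \<in> board [n, m]"
  then have "length xs = 2" by (simp add: board_def)
  then have "xs = [xs ! 0, xs ! 1]"
    by (cases xs; cases "tl xs") auto
  moreover have "1 \<le> xs ! 0" "xs ! 0 \<le> int n" "1 \<le> xs ! 1" "xs ! 1 \<le> int m"
    using xs by (auto simp: board_def)
  ultimately show "\<exists>i j. xs = [i, j] \<and> 1 \<le> i \<and> i \<le> int n \<and> 1 \<le> j \<and> j \<le> int m"
    by blast
next
  assume "\<exists>i j. xs = [i, j] \<and> 1 \<le> i \<and> i \<le> int n \<and> 1 \<le> j \<and> j \<le> int m"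
  then show "xs \<in> board [n, m]"
    by (auto simp: board_def less_Suc_eq)
qed

lemma ham_cycle_board_2d_long_side:
  assumes cs: "ham_cycle knight_adj (board [n, m]) cs"
  shows "4 \<le> n \<or> 4 \<le> m"
proof -
  have "hd cs \<in> board [n, m]"
    using cs by (metis ham_cycle_def hd_in_set list.size(3) not_numeral_le_zero)
  then obtain u where "u \<in> board [n, m]" "knight_adj (hd cs) u"
    using ham_cycle_two_edges_at[OF symp_knight_adj cs] by metis
  with \<open>hd cs \<in> board [n, m]\<close> have "2 \<le> n" "2 \<le> m"
    by (auto simp: board_2d knight_adj_2d)
  then have "[2, 2] \<in> board [n, m]"
    by (simp add: board_2d)
  then obtain w where "w \<in> board [n, m]" "knight_adj [2, 2] w"
    using ham_cycle_two_edges_at[OF symp_knight_adj cs] by metis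
  then show ?thesis
    by (auto simp: board_2d knight_adj_2d)
qed

definition parallel_pair_at_corner :: "int list list \<Rightarrow> (int \<Rightarrow> int \<Rightarrow> int list) \<Rightarrow> bool" where
  "parallel_pair_at_corner cs P \<longleftrightarrow> (\<exists>e f. parallel_edges cs e f \<and>
     (\<forall>E\<in>{e, f}. E \<inter> {P 0 0, P 2 0} \<noteq> {} \<and> E \<subseteq> case_prod P ` ({0..4} \<times> {0..2})))"

text \<open>The corner cell P 0 0 has only the two neighbours P 1 2 and P 2 1, so both moves are in
  the tour; the cell P 2 0 has a tour edge to a neighbour other than P 1 2, and that edge is
  parallel to one of the two edges at the corner.\<close>
lemma corner_parallel_edges:
  fixes P :: "int \<Rightarrow> int \<Rightarrow> int list"
  assumes cs: "ham_cycle knight_adj B cs"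
    and P_inj: "\<And>a b c d. P a b = P c d \<Longrightarrow> a = c \<and> b = d"
    and P_knight: "\<And>a b c d. knight_adj (P a b) (P c d) \<longleftrightarrow>
      \<bar>c - a\<bar> = 1 \<and> \<bar>d - b\<bar> = 2 \<or> \<bar>c - a\<bar> = 2 \<and> \<bar>d - b\<bar> = 1"
    and P_two_step: "\<And>a b c. \<bar>c - a\<bar> = 2 \<Longrightarrow> two_step (P a b) (P c b)"
    and B_quadrant: "\<And>v. v \<in> B \<Longrightarrow> \<exists>a b. v = P a b \<and> 0 \<le> a \<and> 0 \<le> b"
    and B_down: "\<And>a b b'. P a b \<in> B \<Longrightarrow> 0 \<le> b' \<Longrightarrow> b' \<le> b \<Longrightarrow> P a b' \<in> B"
    and corner: "P 0 0 \<in> B"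
  shows "parallel_pair_at_corner cs P"
proof -
  let ?box = "case_prod P ` ({0..4} \<times> {0..2})"
  have in_box: "P a b \<in> ?box" if "0 \<le> a" "a \<le> 4" "0 \<le> b" "b \<le> 2" for a b
    using that by (auto intro: image_eqI[of _ _ "(a, b)"])
  have neighbour: "\<exists>a b. u = P a b \<and> 0 \<le> a \<and> 0 \<le> b \<and>
      (\<bar>a - c\<bar> = 1 \<and> \<bar>b - d\<bar> = 2 \<or> \<bar>a - c\<bar> = 2 \<and> \<bar>b - d\<bar> = 1)"
    if u: "u \<in> B" and adj: "knight_adj (P c d) u" for u c d
  proof -
    obtain a b where "u = P a b" "0 \<le> a" "0 \<le> b"
      using B_quadrant[OF u] by blast
    then show ?thesis
      using adj P_knight[of c d a b] by blast
  qed
  obtain u w where "u \<noteq> w" "u \<in> B" "w \<in> B" "knight_adj (P 0 0) u" "knight_adj (P 0 0) w"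
    "{P 0 0, u} \<in> cycle_edges cs" "{P 0 0, w} \<in> cycle_edges cs"
    using ham_cycle_two_edges_at[OF symp_knight_adj cs corner] by metis
  moreover have "v \<in> {P 1 2, P 2 1}" if v: "v \<in> B" and adj: "knight_adj (P 0 0) v" for v
  proof -
    obtain a b where "v = P a b" "0 \<le> a" "0 \<le> b" "\<bar>a\<bar> = 1 \<and> \<bar>b\<bar> = 2 \<or> \<bar>a\<bar> = 2 \<and> \<bar>b\<bar> = 1"
      using neighbour[OF v adj] by auto
    then have "a = 1 \<and> b = 2 \<or> a = 2 \<and> b = 1"
      by arith
    then show ?thesis using \<open>v = P a b\<close> by auto
  qed
  ultimately have e12: "{P 0 0, P 1 2} \<in> cycle_edges cs" and e21: "{P 0 0, P 2 1} \<in> cycle_edges cs"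
    and "P 2 1 \<in> B"
    by auto
  then have "P 2 0 \<in> B"
    using B_down by force
  then obtain u' w' where "u' \<noteq> w'" "u' \<in> B" "w' \<in> B" "knight_adj (P 2 0) u'" "knight_adj (P 2 0) w'"
    "{P 2 0, u'} \<in> cycle_edges cs" "{P 2 0, w'} \<in> cycle_edges cs"
    using ham_cycle_two_edges_at[OF symp_knight_adj cs] by metis
  moreover have "v \<in> {P 1 2, P 3 2, P 0 1, P 4 1}" if v: "v \<in> B" and adj: "knight_adj (P 2 0) v" for v
  proof -
    obtain a b where "v = P a b" "0 \<le> a" "0 \<le> b" "\<bar>a - 2\<bar> = 1 \<and> \<bar>b\<bar> = 2 \<or> \<bar>a - 2\<bar> = 2 \<and> \<bar>b\<bar> = 1"
      using neighbour[OF v adj] by auto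
    then have "a = 1 \<and> b = 2 \<or> a = 3 \<and> b = 2 \<or> a = 0 \<and> b = 1 \<or> a = 4 \<and> b = 1"
      by arith
    then show ?thesis using \<open>v = P a b\<close> by auto
  qed
  ultimately have "u' \<in> {P 1 2, P 3 2, P 0 1, P 4 1}" "w' \<in> {P 1 2, P 3 2, P 0 1, P 4 1}"
    by simp_all
  moreover obtain t where "t \<in> {u', w'}" "t \<noteq> P 1 2"
    using \<open>u' \<noteq> w'\<close> by blast
  ultimately have t: "{P 2 0, t} \<in> cycle_edges cs" "t \<in> {P 3 2, P 0 1, P 4 1}"
    using \<open>{P 2 0, u'} \<in> cycle_edges cs\<close> \<open>{P 2 0, w'} \<in> cycle_edges cs\<close> by auto
  have "P 0 0 \<noteq> P 2 0" "P 0 0 \<noteq> t"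
    using t(2) P_inj[of 0 0 2 0] P_inj[of 0 0 3 2] P_inj[of 0 0 0 1] P_inj[of 0 0 4 1] by auto
  then have distinct: "{P 0 0, x} \<noteq> {P 2 0, t}" for x
    by (metis insertI1 insertE singletonD)
  have step: "two_step (P 0 0) (P 2 0)"
    using P_two_step[where a = 0 and b = 0 and c = 2] by simp
  have pair: "parallel_pair_at_corner cs P"
    if "{P 0 0, x} \<in> cycle_edges cs" "two_step x t" "x \<in> ?box" for x
  proof -
    have "parallel_edges cs {P 0 0, x} {P 2 0, t}"
      using parallel_edgesI[OF that(1) t(1) distinct step that(2)] .
    moreover have "P 0 0 \<in> ?box" "P 2 0 \<in> ?box" "t \<in> ?box"
      using t(2) in_box by auto
    ultimately show ?thesis
      using that(3) unfolding parallel_pair_at_corner_def by blast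
  qed
  from t(2) show ?thesis
  proof (elim insertE emptyE)
    assume "t = P 3 2"
    then show ?thesis using pair[OF e12] P_two_step[where a = 1 and b = 2 and c = 3] in_box by simp
  next
    assume "t = P 0 1"
    then show ?thesis using pair[OF e21] P_two_step[where a = 2 and b = 1 and c = 0] in_box by simp
  next
    assume "t = P 4 1"
    then show ?thesis using pair[OF e21] P_two_step[where a = 2 and b = 1 and c = 4] in_box by simp
  qed
qed

lemma unit_affine_diff_abs: "\<bar>s\<bar> = 1 \<Longrightarrow> \<bar>(p + s * c) - (p + s * a)\<bar> = \<bar>c - (a::int)\<bar>"
  by (metis abs_mult add_diff_cancel_left mult.left_neutral right_diff_distrib)

lemma unit_affine_inverse: "\<bar>s\<bar> = 1 \<Longrightarrow> p + s * (s * (i - p)) = (i::int)"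
  by (metis abs_mult_self_eq add.commute diff_add_cancel mult.assoc mult_1)

lemma corner_parallel_edges_affine:
  fixes P :: "int \<Rightarrow> int \<Rightarrow> int list"
  assumes cs: "ham_cycle knight_adj B cs" and B_2d: "\<And>v. v \<in> B \<Longrightarrow> \<exists>i j. v = [i, j]"
    and sx: "\<bar>sx\<bar> = 1" and sy: "\<bar>sy\<bar> = 1"
    and P: "(\<forall>a b. P a b = [px + sx * a, py + sy * b]) \<or> (\<forall>a b. P a b = [py + sy * b, px + sx * a])"
    and B_quadrant: "\<And>a b. P a b \<in> B \<Longrightarrow> 0 \<le> a \<and> 0 \<le> b"
    and B_down: "\<And>a b b'. P a b \<in> B \<Longrightarrow> 0 \<le> b' \<Longrightarrow> b' \<le> b \<Longrightarrow> P a b' \<in> B"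
    and corner: "P 0 0 \<in> B"
  shows "parallel_pair_at_corner cs P"
proof (rule corner_parallel_edges[where P = P, OF cs _ _ _ _ B_down corner])
  have dx: "\<bar>(px + sx * c) - (px + sx * a)\<bar> = \<bar>c - a\<bar>" for a c
    using unit_affine_diff_abs[OF sx] .
  have dy: "\<bar>(py + sy * d) - (py + sy * b)\<bar> = \<bar>d - b\<bar>" for b d
    using unit_affine_diff_abs[OF sy] .
  have "sx \<noteq> 0" "sy \<noteq> 0" using sx sy by auto
  then show "P a b = P c d \<Longrightarrow> a = c \<and> b = d" for a b c d
    using P by auto
  show "knight_adj (P a b) (P c d) \<longleftrightarrow>
      \<bar>c - a\<bar> = 1 \<and> \<bar>d - b\<bar> = 2 \<or> \<bar>c - a\<bar> = 2 \<and> \<bar>d - b\<bar> = 1" for a b c d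
    using P by (elim disjE) (simp_all only: knight_adj_2d dx dy, blast)
  show "\<bar>c - a\<bar> = 2 \<Longrightarrow> two_step (P a b) (P c b)" for a b c
    using P two_step_2d_fst two_step_2d_snd dx by (elim disjE) simp_all
  show "\<exists>a b. v = P a b \<and> 0 \<le> a \<and> 0 \<le> b" if vB: "v \<in> B" for v
  proof -
    obtain i j where v: "v = [i, j]" using B_2d[OF vB] by blast
    from P have "\<exists>a b. v = P a b"
    proof (elim disjE)
      assume "\<forall>a b. P a b = [px + sx * a, py + sy * b]"
      then have "v = P (sx * (i - px)) (sy * (j - py))"
        using v unit_affine_inverse[OF sx] unit_affine_inverse[OF sy] by simp
      then show ?thesis by blast
    next
      assume "\<forall>a b. P a b = [py + sy * b, px + sx * a]"
      then have "v = P (sx * (j - px)) (sy * (i - py))"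
        using v unit_affine_inverse[OF sx] unit_affine_inverse[OF sy] by simp
      then show ?thesis by blast
    qed
    then show ?thesis
      using B_quadrant vB by blast
  qed
qed

lemma doubly_parallel_tour_of_corners:
  assumes cs: "ham_cycle knight_adj (board ns) cs"
    and "parallel_pair_at_corner cs P" "parallel_pair_at_corner cs Q"
    and far: "{P 0 0, P 2 0} \<inter> case_prod Q ` ({0..4} \<times> {0..2}) = {}"
  shows "doubly_parallel_tour ns"
proof -
  obtain e f g h where "parallel_edges cs e f" "parallel_edges cs g h"
    and near: "\<forall>E\<in>{e, f}. E \<inter> {P 0 0, P 2 0} \<noteq> {}"
    and inside: "\<forall>E\<in>{g, h}. E \<subseteq> case_prod Q ` ({0..4} \<times> {0..2})"
    using assms(2,3) unfolding parallel_pair_at_corner_def by meson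
  moreover have "E \<noteq> E'" if E: "E \<in> {e, f}" and E': "E' \<in> {g, h}" for E E'
  proof
    assume "E = E'"
    obtain v where "v \<in> E" "v \<in> {P 0 0, P 2 0}"
      using near E by blast
    moreover have "E \<subseteq> case_prod Q ` ({0..4} \<times> {0..2})"
      using inside E' \<open>E = E'\<close> by blast
    ultimately show False
      using far by blast
  qed
  then have "{e, f} \<inter> {g, h} = {}" by blast
  ultimately show ?thesis
    using cs unfolding doubly_parallel_tour_def by meson
qed

lemma doubly_parallel_tour_2d:
  assumes "0 < n" "0 < m" "closed_knight_tour [n, m]"
  shows "doubly_parallel_tour [n, m]"
proof -
  obtain cs where cs: "ham_cycle knight_adj (board [n, m]) cs"
    using assms(3) closed_knight_tour_iff_ham_cycle by blast
  have B_2d: "\<And>v. v \<in> board [n, m] \<Longrightarrow> \<exists>i j. v = [i, j]"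
    using board_2d by blast
  from ham_cycle_board_2d_long_side[OF cs] show ?thesis
  proof
    assume "4 \<le> m"
    define P where "P a b = [1 + a, 1 + b]" for a b :: int
    define Q where "Q a b = [1 + a, int m - b]" for a b :: int
    show ?thesis
    proof (rule doubly_parallel_tour_of_corners[OF cs])
      show "parallel_pair_at_corner cs P"
        by (rule corner_parallel_edges_affine[OF cs B_2d, where sx = 1 and sy = 1 and px = 1 and py = 1])
          (use assms(1,2) in \<open>auto simp: P_def board_2d\<close>)
      show "parallel_pair_at_corner cs Q"
        by (rule corner_parallel_edges_affine[OF cs B_2d, where sx = 1 and sy = "-1" and px = 1 and py = "int m"])
          (use assms(1,2) in \<open>auto simp: Q_def board_2d\<close>)
      show "{P 0 0, P 2 0} \<inter> case_prod Q ` ({0..4} \<times> {0..2}) = {}"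
        using \<open>4 \<le> m\<close> by (auto simp: P_def Q_def)
    qed
  next
    assume "4 \<le> n"
    define P where "P a b = [1 + b, 1 + a]" for a b :: int
    define Q where "Q a b = [int n - b, 1 + a]" for a b :: int
    show ?thesis
    proof (rule doubly_parallel_tour_of_corners[OF cs])
      show "parallel_pair_at_corner cs P"
        by (rule corner_parallel_edges_affine[OF cs B_2d, where sx = 1 and sy = 1 and px = 1 and py = 1])
          (use assms(1,2) in \<open>auto simp: P_def board_2d\<close>)
      show "parallel_pair_at_corner cs Q"
        by (rule corner_parallel_edges_affine[OF cs B_2d, where sx = 1 and sy = "-1" and px = 1 and py = "int n"])
          (use assms(1,2) in \<open>auto simp: Q_def board_2d\<close>)
      show "{P 0 0, P 2 0} \<inter> case_prod Q ` ({0..4} \<times> {0..2}) = {}"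
        using \<open>4 \<le> n\<close> by (auto simp: P_def Q_def)
    qed
  qed
qed

theorem corollary4p3:
  fixes n m :: nat and ps :: "nat list"
  assumes "0 < n" and "0 < m" and "\<forall>p\<in>set ps. 0 < p"
    and "closed_knight_tour [n, m]"
  shows "closed_knight_tour (n # m # ps)"
proof -
  have "doubly_parallel_tour (n # m # ps)"
    using assms(3)
  proof (induction ps rule: rev_induct)
    case Nil
    show ?case using doubly_parallel_tour_2d[OF assms(1,2,4)] by simp
  next
    case (snoc p ps)
    then show ?case using doubly_parallel_tour_snoc[of "n # m # ps" p] by simp
  qed
  then show ?thesis
    by (rule doubly_parallel_tour_imp_closed_knight_tour)
qed

end
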